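(* Let $S$ be a $p\times p$ random sample covariance matrix (based on $n$ observations) whose diagonal entries satisfy, marginally, $$\hat\sigma_\nu^2:=S_{\nu\nu}\sim\sigma_\nu^2\,\chi^2_{(n)}/n,\qquad \nu=1,\dots,p,$$ for some population variances $\sigma_\nu^2>0$, with no assumption on the joint distribution of $\{\hat\sigma_\nu^2\}$. Let $1\le k\le p$, let $\sigma_{(1)}^2\ge\sigma_{(2)}^2\ge\cdots$ and $\hat\sigma_{(1)}^2\ge\hat\sigma_{(2)}^2\ge\cdots$ denote the ordered population and sample variances, let $\gamma>0$, and put $\alpha_n=\gamma n^{-1/2}(\log n)^{1/2}$. Define $$I_{in}=\{l:\sigma_l^2\ge\sigma_{(k)}^2(1+\alpha_n)\},\qquad I_{out}=\{l:\sigma_l^2\le\sigma_{(k)}^2(1-\alpha_n)\},$$ and the events of false exclusion and false inclusion $$FE=\bigcup_{l\in I_{in}}\{\hat\sigma_l^2<\hat\sigma_{(k)}^2\},\qquad FI=\bigcup_{l\in I_{out}}\{\hat\sigma_l^2\ge\hat\sigma_{(k)}^2\}.$$ Then $$P\{FE\cup FI\}\le 2pk\,n^{-b(\gamma)}+k\,n^{-(1-2\alpha_n)b(\gamma)},\qquad b(\gamma)=\Bigl[\frac{\gamma\sqrt3}{4+2\sqrt3}\Bigr]^2.$$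
   Context: $\chi^2_{(n)}$ denotes a chi-square random variable with $n$ degrees of freedom. The selected subset $\hat I_k$ consists of the indices of the $k$ largest sample variances $\hat\sigma_\nu^2$; $FE$ means some index in $I_{in}$ is not selected and $FI$ means some index in $I_{out}$ is selected. *)

theory Defs
  imports "HOL-Probability.Probability"
begin

definition chi_square_density :: "nat \<Rightarrow> real \<Rightarrow> real" where
  "chi_square_density n x =
     (if x > 0 then x powr (real n / 2 - 1) * exp (- x / 2) / (2 powr (real n / 2) * Gamma (real n / 2))
      else 0)"

definition chi_square_law :: "nat \<Rightarrow> real measure" where
  "chi_square_law n = density lborel (\<lambda>x. ennreal (chi_square_density n x))"

definition kth_largest :: "nat \<Rightarrow> (nat \<Rightarrow> real) \<Rightarrow> nat \<Rightarrow> real" where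
  "kth_largest k f p = rev (sort (map f [0..<p])) ! (k - 1)"

end

theory Submission
  imports Defs
begin

text \<open>Each sample variance is distributed as \<open>\<sigma>\<^sup>2 \<chi>\<^sup>2\<^sub>n / n\<close>, and Chernoff bounds on the
  chi-square moment generating function give \<open>P(\<chi>\<^sup>2\<^sub>n \<ge> n(1 + d)) \<le> exp(-3nd\<^sup>2/16)\<close> for
  \<open>d \<le> 1/3\<close> and \<open>P(\<chi>\<^sup>2\<^sub>n \<le> n(1 - d)) \<le> exp(-nd\<^sup>2/4)\<close>. Let S be the k-th largest population
  variance. If an index of \<open>I_in\<close> is excluded, then either its own variance is underestimated by
  the factor \<open>(1 + \<epsilon>)/(1 + \<alpha>)\<close>, or the k-th largest sample variance exceeds \<open>S(1 + \<epsilon>)\<close>; since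
  at most \<open>k - 1\<close> population variances exceed S, some index with population variance at most S
  is then overestimated by the factor \<open>1 + \<epsilon>\<close>. Symmetrically, a false inclusion means that an
  index of \<open>I_out\<close> is overestimated by \<open>1 + \<epsilon>\<close>, or that one of k fixed indices with population
  variance at least S is underestimated by \<open>1 - (\<alpha> - \<epsilon>)\<close>. The choice \<open>\<epsilon> = 2\<alpha>/(2 + \<surd>3)\<close> makes
  \<open>\<alpha> - \<epsilon> = \<epsilon>\<surd>3/2\<close>, so that all tail exponents are at least \<open>b ln n\<close> (up to the factor
  \<open>(1 + \<alpha>)\<^sup>2\<close> for the first kind of event), and a union bound over at most \<open>k + 2p\<close> events
  gives the claim.\<close>

lemma nn_integral_gamma_kernel:
  fixes m c :: real
  assumes m: "m > 0" and c: "c > 0"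
  shows "(\<integral>\<^sup>+x. ennreal (indicator {0..} x * x powr (m - 1) * exp (- c * x)) \<partial>lborel)
         = ennreal (Gamma m / c powr m)"
proof -
  let ?f = "\<lambda>x::real. ennreal (indicator {0..} x * x powr (m - 1) * exp (- c * x))"
  have kernel_scale: "ennreal \<bar>c\<bar> * ennreal (indicator {0..} (c * x) * (c * x) powr (m - 1) / exp (c * x))
      = ennreal (c powr m) * ?f x" for x
  proof (cases "x \<ge> 0")
    case True
    have "\<bar>c\<bar> * ((c * x) powr (m - 1) / exp (c * x)) = c powr m * (x powr (m - 1) * exp (- c * x))"
      using c True by (simp add: powr_mult powr_diff exp_minus field_simps)
    thus ?thesis using True c
      by (simp add: indicator_def ennreal_mult'[symmetric] zero_le_mult_iff)
  qed (use c in \<open>simp add: indicator_def zero_le_mult_iff\<close>)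
  have "ennreal (Gamma m)
      = (\<integral>\<^sup>+t. ennreal (indicator {0..} t * t powr (m - 1) / exp t) \<partial>density (distr lborel borel ((*) c)) (\<lambda>_. \<bar>c\<bar>))"
    using Gamma_conv_nn_integral_real[OF m] c by (subst lborel_distr_mult'[symmetric]) auto
  also have "\<dots> = (\<integral>\<^sup>+x. ennreal \<bar>c\<bar> * ennreal (indicator {0..} (c * x) * (c * x) powr (m - 1) / exp (c * x)) \<partial>lborel)"
    by (simp add: nn_integral_density nn_integral_distr)
  also have "\<dots> = (\<integral>\<^sup>+x. ennreal (c powr m) * ?f x \<partial>lborel)"
    by (simp only: kernel_scale)
  also have "\<dots> = ennreal (c powr m) * (\<integral>\<^sup>+x. ?f x \<partial>lborel)"
    by (rule nn_integral_cmult) simp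
  finally have "ennreal (Gamma m) = ennreal (c powr m) * (\<integral>\<^sup>+x. ?f x \<partial>lborel)" .
  moreover have "ennreal (Gamma m) = ennreal (c powr m) * ennreal (Gamma m / c powr m)"
    using c by (simp add: ennreal_mult'[symmetric])
  ultimately show ?thesis
    using c by (simp add: ennreal_mult_cancel_left)
qed

lemma nn_integral_exp_chi_square:
  assumes n: "n \<ge> 1" and t: "t < 1/2"
  shows "(\<integral>\<^sup>+x. ennreal (exp (t * x)) \<partial>chi_square_law n) = ennreal ((1 - 2 * t) powr (- (real n / 2)))"
proof -
  define m where "m = real n / 2"
  define c where "c = 1/2 - t"
  define K where "K = 1 / (2 powr m * Gamma m)"
  have m: "m > 0" using n by (simp add: m_def)
  have c: "c > 0" using t by (simp add: c_def)
  have K: "K > 0" using Gamma_real_pos[OF m] by (simp add: K_def)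
  have density_exp: "ennreal (chi_square_density n x) * ennreal (exp (t * x)) =
      ennreal K * ennreal (indicator {0..} x * x powr (m - 1) * exp (- c * x))" for x
  proof (cases "x > 0")
    case True
    have "chi_square_density n x * exp (t * x) = K * (x powr (m - 1) * exp (- c * x))"
      using True unfolding chi_square_density_def K_def c_def m_def
      by (simp add: exp_add[symmetric] field_simps)
    moreover have "chi_square_density n x \<ge> 0"
      using True Gamma_real_pos[OF m] by (simp add: chi_square_density_def m_def)
    ultimately show ?thesis using True K
      by (simp add: indicator_def ennreal_mult'[symmetric] del: ennreal_mult')
  qed (cases "x = 0"; auto simp: indicator_def chi_square_density_def)
  have "(\<integral>\<^sup>+x. ennreal (exp (t * x)) \<partial>chi_square_law n)
      = (\<integral>\<^sup>+x. ennreal K * ennreal (indicator {0..} x * x powr (m - 1) * exp (- c * x)) \<partial>lborel)"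
    unfolding chi_square_law_def density_exp[symmetric] chi_square_density_def
    by (subst nn_integral_density) auto
  also have "\<dots> = ennreal K * ennreal (Gamma m / c powr m)"
    by (subst nn_integral_cmult) (simp, simp only: nn_integral_gamma_kernel[OF m c])
  also have "\<dots> = ennreal (K * (Gamma m / c powr m))"
    using K by (intro ennreal_mult'[symmetric]) simp
  also have "K * (Gamma m / c powr m) = (2 * c) powr (- m)"
    using Gamma_real_pos[OF m] c by (simp add: K_def powr_mult powr_minus_divide)
  finally show ?thesis by (simp add: c_def m_def)
qed

lemma prob_space_chi_square_law: "n \<ge> 1 \<Longrightarrow> prob_space (chi_square_law n)"
  using nn_integral_exp_chi_square[of n 0]
  by (intro prob_spaceI) (simp add: chi_square_law_def emeasure_density)

lemma sets_chi_square_law [measurable_cong]: "sets (chi_square_law n) = sets borel"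
  by (simp add: chi_square_law_def)

lemma chi_square_upper_Chernoff:
  assumes n: "n \<ge> 1" and l: "0 < l" "l < 1/2"
  shows "emeasure (chi_square_law n) {x. a \<le> x} \<le> ennreal (exp (- l * a) * (1 - 2 * l) powr (- (real n / 2)))"
  using Chernoff_ineq_nn_integral_ge[of l UNIV "chi_square_law n" "\<lambda>x. x" a] l
    nn_integral_exp_chi_square[OF n, of l]
  by (simp add: ennreal_mult')

lemma chi_square_lower_Chernoff:
  assumes n: "n \<ge> 1" and l: "0 < l"
  shows "emeasure (chi_square_law n) {x. x \<le> a} \<le> ennreal (exp (l * a) * (1 + 2 * l) powr (- (real n / 2)))"
  using Chernoff_ineq_nn_integral_le[of l UNIV "chi_square_law n" "\<lambda>x. x" a] l
    nn_integral_exp_chi_square[OF n, of "- l"]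
  by (simp add: ennreal_mult')

lemma ln_one_plus_le:
  fixes d :: real assumes d: "0 \<le> d" "d \<le> 1/3"
  shows "ln (1 + d) \<le> d - 3 * d\<^sup>2 / 8"
proof -
  let ?f = "\<lambda>x::real. x - 3 * x\<^sup>2 / 8 - ln (1 + x)"
  have "?f 0 \<le> ?f d"
  proof (rule DERIV_nonneg_imp_nondecreasing[OF d(1)])
    fix x :: real assume x: "0 \<le> x" "x \<le> d"
    have "DERIV ?f x :> x * (1 - 3 * x) / (4 * (1 + x))"
      using x by (auto intro!: derivative_eq_intros simp: power2_eq_square field_simps)
    moreover have "x * (1 - 3 * x) / (4 * (1 + x)) \<ge> 0"
      using x d by (intro divide_nonneg_pos mult_nonneg_nonneg) auto
    ultimately show "\<exists>y. DERIV ?f x :> y \<and> y \<ge> 0" by blast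
  qed
  thus ?thesis by simp
qed

lemma ln_one_minus_le:
  fixes d :: real assumes d: "0 \<le> d" "d < 1"
  shows "ln (1 - d) \<le> - d - d\<^sup>2 / 2"
proof -
  let ?f = "\<lambda>x::real. - x - x\<^sup>2 / 2 - ln (1 - x)"
  have "?f 0 \<le> ?f d"
  proof (rule DERIV_nonneg_imp_nondecreasing[OF d(1)])
    fix x :: real assume x: "0 \<le> x" "x \<le> d"
    have "DERIV ?f x :> x\<^sup>2 / (1 - x)"
      using x d by (auto intro!: derivative_eq_intros simp: power2_eq_square field_simps)
    moreover have "x\<^sup>2 / (1 - x) \<ge> 0" using x d by (intro divide_nonneg_pos) auto
    ultimately show "\<exists>y. DERIV ?f x :> y \<and> y \<ge> 0" by blast
  qed
  thus ?thesis by simp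
qed

lemma chi_square_upper_tail:
  assumes n: "n \<ge> 1" and d: "0 \<le> d" "d \<le> 1/3"
  shows "measure (chi_square_law n) {x. real n * (1 + d) \<le> x} \<le> exp (- 3 * real n * d\<^sup>2 / 16)"
proof (cases "d = 0")
  case True
  then show ?thesis using prob_space.prob_le_1[OF prob_space_chi_square_law[OF n]] by simp
next
  case False
  \<comment> \<open>the minimiser of the Chernoff bound\<close>
  define l where "l = d / (2 * (1 + d))"
  have l: "0 < l" "l < 1/2" using d False by (auto simp: l_def field_simps)
  have e1: "1 - 2 * l = inverse (1 + d)" and e2: "l * (real n * (1 + d)) = real n * d / 2"
    using d by (simp_all add: l_def field_simps)
  have "exp (- l * (real n * (1 + d))) * (1 - 2 * l) powr (- (real n / 2))
        = exp (- real n * d / 2 + real n / 2 * ln (1 + d))"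
    using d by (simp add: e1 e2 powr_def ln_inverse flip: exp_add)
  also have "\<dots> \<le> exp (- 3 * real n * d\<^sup>2 / 16)"
    using mult_left_mono[OF ln_one_plus_le[OF d], of "real n / 2"] by (simp add: algebra_simps)
  finally show ?thesis
    using chi_square_upper_Chernoff[OF n l, of "real n * (1 + d)"]
    unfolding measure_def by (intro enn2real_leI) (auto intro: order_trans)
qed

lemma chi_square_lower_tail:
  assumes n: "n \<ge> 1" and d: "0 \<le> d" "d < 1"
  shows "measure (chi_square_law n) {x. x \<le> real n * (1 - d)} \<le> exp (- real n * d\<^sup>2 / 4)"
proof (cases "d = 0")
  case True
  then show ?thesis using prob_space.prob_le_1[OF prob_space_chi_square_law[OF n]] by simp
next
  case False
  define l where "l = d / (2 * (1 - d))"
  have l: "0 < l" using d False by (auto simp: l_def)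
  have e1: "1 + 2 * l = inverse (1 - d)" and e2: "l * (real n * (1 - d)) = real n * d / 2"
    using d by (simp_all add: l_def field_simps)
  have "exp (l * (real n * (1 - d))) * (1 + 2 * l) powr (- (real n / 2))
        = exp (real n * d / 2 + real n / 2 * ln (1 - d))"
    using d by (simp add: e1 e2 powr_def ln_inverse flip: exp_add)
  also have "\<dots> \<le> exp (- real n * d\<^sup>2 / 4)"
    using mult_left_mono[OF ln_one_minus_le[OF d], of "real n / 2"] by (simp add: algebra_simps)
  finally show ?thesis
    using chi_square_lower_Chernoff[OF n l, of "real n * (1 - d)"]
    unfolding measure_def by (intro enn2real_leI) (auto intro: order_trans)
qed

lemma (in prob_space) prob_scaled_chi_square:
  assumes Y: "Y \<in> borel_measurable M"
    and law: "distr M borel Y = distr (chi_square_law n) borel (\<lambda>x. s * x / real n)"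
    and A: "A \<in> sets borel"
  shows "prob {\<omega> \<in> space M. Y \<omega> \<in> A} = measure (chi_square_law n) {x. s * x / real n \<in> A}"
proof -
  have "prob {\<omega> \<in> space M. Y \<omega> \<in> A} = measure (distr M borel Y) A"
    using Y A by (simp add: measure_distr vimage_def Int_def conj_commute)
  also have "\<dots> = measure (chi_square_law n) {x. s * x / real n \<in> A}"
    using A by (simp add: law measure_distr vimage_def chi_square_law_def)
  finally show ?thesis .
qed

lemma (in prob_space) scaled_chi_square_upper_tail:
  assumes n: "n \<ge> 1" and s: "s > 0" and Y: "Y \<in> borel_measurable M"
    and law: "distr M borel Y = distr (chi_square_law n) borel (\<lambda>x. s * x / real n)"
    and d: "0 \<le> d" "d \<le> 1/3"
  shows "prob {\<omega> \<in> space M. s * (1 + d) \<le> Y \<omega>} \<le> exp (- 3 * real n * d\<^sup>2 / 16)"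
proof -
  have "s * (1 + d) \<le> s * x / real n \<longleftrightarrow> real n * (1 + d) \<le> x" for x
    using n s mult_le_cancel_left_pos[OF s, of "1 + d" "x / real n"]
    by (simp add: le_divide_eq mult.commute)
  then have "{x. s * x / real n \<in> {s * (1 + d)..}} = {x. real n * (1 + d) \<le> x}"
    by auto
  then show ?thesis
    using prob_scaled_chi_square[OF Y law, of "{s * (1 + d)..}"] chi_square_upper_tail[OF n d]
    by simp
qed

lemma (in prob_space) scaled_chi_square_lower_tail:
  assumes n: "n \<ge> 1" and s: "s > 0" and Y: "Y \<in> borel_measurable M"
    and law: "distr M borel Y = distr (chi_square_law n) borel (\<lambda>x. s * x / real n)"
    and d: "0 \<le> d" "d < 1"
  shows "prob {\<omega> \<in> space M. Y \<omega> \<le> s * (1 - d)} \<le> exp (- real n * d\<^sup>2 / 4)"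
proof -
  have "s * x / real n \<le> s * (1 - d) \<longleftrightarrow> x \<le> real n * (1 - d)" for x
    using n s mult_le_cancel_left_pos[OF s, of "x / real n" "1 - d"]
    by (simp add: divide_le_eq mult.commute)
  then have "{x. s * x / real n \<in> {..s * (1 - d)}} = {x. x \<le> real n * (1 - d)}"
    by auto
  then show ?thesis
    using prob_scaled_chi_square[OF Y law, of "{..s * (1 - d)}"] chi_square_lower_tail[OF n d]
    by simp
qed

lemma length_filter_sorted_values:
  fixes f :: "nat \<Rightarrow> 'a::linorder"
  shows "length (filter P (rev (sort (map f [0..<p])))) = card {j. j < p \<and> P (f j)}"
proof -
  have "length (filter P (rev (sort (map f [0..<p])))) = size (mset (filter P (map f [0..<p])))"
    by (simp flip: size_mset)
  also have "\<dots> = length (filter (P \<circ> f) [0..<p])" by (simp only: size_mset filter_map length_map)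
  also have "\<dots> = card {j. j < p \<and> P (f j)}"
    by (subst distinct_length_filter) (auto intro: arg_cong[where f=card])
  finally show ?thesis .
qed

lemma
  fixes f :: "nat \<Rightarrow> real"
  assumes k: "1 \<le> k" "k \<le> p"
  shows card_greater_kth_largest: "card {j. j < p \<and> kth_largest k f p < f j} < k"
    and card_ge_kth_largest: "k \<le> card {j. j < p \<and> kth_largest k f p \<le> f j}"
proof -
  define L where "L = rev (sort (map f [0..<p]))"
  have kth: "kth_largest k f p = L ! (k - 1)" by (simp add: L_def kth_largest_def)
  have len: "length L = p" by (simp add: L_def)
  have count: "card {j. j < p \<and> P (f j)} = card {i. i < p \<and> P (L ! i)}" for P
  proof -
    have "card {i. i < p \<and> P (L ! i)} = length (filter P L)"
      using len by (simp add: length_filter_conv_card)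
    also have "\<dots> = card {j. j < p \<and> P (f j)}"
      unfolding L_def by (rule length_filter_sorted_values)
    finally show ?thesis by simp
  qed
  have sorted: "sorted_wrt (\<ge>) L"
    unfolding L_def using sorted_sort[of "map f [0..<p]"] by (simp add: sorted_wrt_rev)
  have desc: "L ! j \<le> L ! i" if "i \<le> j" "j < p" for i j
  proof (cases "i = j")
    case False
    then show ?thesis using sorted_wrt_nth_less[OF sorted, of i j] that len by simp
  qed simp
  have "{i. i < p \<and> L ! (k - 1) < L ! i} \<subseteq> {..<k - 1}"
    using desc by (force simp: not_less[symmetric])
  then have "card {i. i < p \<and> L ! (k - 1) < L ! i} \<le> k - 1"
    using card_mono[of "{..<k - 1}"] by fastforce
  then show "card {j. j < p \<and> kth_largest k f p < f j} < k"
    using k by (simp add: count kth)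
  have "{..<k} \<subseteq> {i. i < p \<and> L ! (k - 1) \<le> L ! i}"
    using desc k by auto
  then have "k \<le> card {i. i < p \<and> L ! (k - 1) \<le> L ! i}"
    using card_mono[of "{i. i < p \<and> L ! (k - 1) \<le> L ! i}" "{..<k}"] by simp
  then show "k \<le> card {j. j < p \<and> kth_largest k f p \<le> f j}"
    by (simp add: count kth)
qed

lemma kth_largest_pos:
  fixes f :: "nat \<Rightarrow> real"
  assumes "1 \<le> k" "k \<le> p" "\<And>j. j < p \<Longrightarrow> f j > 0"
  shows "kth_largest k f p > 0"
proof -
  have "kth_largest k f p \<in> f ` {..<p}"
    using assms(1,2) nth_mem[of "k - 1" "rev (sort (map f [0..<p]))"]
    by (simp add: kth_largest_def atLeast0LessThan)
  then show ?thesis using assms(3) by auto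
qed

lemma ex_le_kth_largest_and_ge_kth_largest:
  fixes f g :: "nat \<Rightarrow> real"
  assumes "1 \<le> k" "k \<le> p"
  shows "\<exists>j<p. g j \<le> kth_largest k g p \<and> kth_largest k f p \<le> f j"
proof (rule ccontr)
  assume "\<not> ?thesis"
  then have "{j. j < p \<and> kth_largest k f p \<le> f j} \<subseteq> {j. j < p \<and> kth_largest k g p < g j}"
    by (auto simp: not_le)
  then have "card {j. j < p \<and> kth_largest k f p \<le> f j} \<le> card {j. j < p \<and> kth_largest k g p < g j}"
    by (intro card_mono) auto
  then show False
    using card_ge_kth_largest[OF assms, of f] card_greater_kth_largest[OF assms, of g] by linarith
qed

lemma ex_in_le_kth_largest:
  fixes f :: "nat \<Rightarrow> real"
  assumes "1 \<le> k" "k \<le> p" and K: "K \<subseteq> {..<p}" "card K = k"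
  shows "\<exists>j\<in>K. f j \<le> kth_largest k f p"
proof (rule ccontr)
  assume "\<not> ?thesis"
  then have "K \<subseteq> {j. j < p \<and> kth_largest k f p < f j}" using K(1) by force
  then have "card K \<le> card {j. j < p \<and> kth_largest k f p < f j}" by (intro card_mono) auto
  then show False using card_greater_kth_largest[OF assms(1,2), of f] K(2) by linarith
qed

lemma false_exclusion_cover:
  fixes X :: "nat \<Rightarrow> 'a \<Rightarrow> real" and s2 :: "nat \<Rightarrow> real"
  assumes k: "1 \<le> k" "k \<le> p" and \<alpha>: "\<alpha> > -1" and \<epsilon>: "\<epsilon> \<ge> 0"
  shows "{\<omega> \<in> \<Omega>. \<exists>l\<in>{l. l < p \<and> s2 l \<ge> kth_largest k s2 p * (1 + \<alpha>)}.
            X l \<omega> < kth_largest k (\<lambda>\<nu>. X \<nu> \<omega>) p}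
    \<subseteq> (\<Union>l\<in>{l. l < p \<and> s2 l \<ge> kth_largest k s2 p * (1 + \<alpha>)}.
          {\<omega> \<in> \<Omega>. X l \<omega> \<le> s2 l * (1 - (\<alpha> - \<epsilon>) / (1 + \<alpha>))})
      \<union> (\<Union>j\<in>{j. j < p \<and> s2 j \<le> kth_largest k s2 p}. {\<omega> \<in> \<Omega>. s2 j * (1 + \<epsilon>) \<le> X j \<omega>})"
    (is "?F \<subseteq> ?Low \<union> ?High")
proof
  fix \<omega> assume "\<omega> \<in> ?F"
  let ?S = "kth_largest k s2 p" and ?T = "kth_largest k (\<lambda>\<nu>. X \<nu> \<omega>) p"
  obtain l where \<omega>: "\<omega> \<in> \<Omega>" "l < p" "?S * (1 + \<alpha>) \<le> s2 l" "X l \<omega> < ?T"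
    using \<open>\<omega> \<in> ?F\<close> by auto
  show "\<omega> \<in> ?Low \<union> ?High"
  proof (cases "X l \<omega> \<le> s2 l * (1 - (\<alpha> - \<epsilon>) / (1 + \<alpha>))")
    case True
    then show ?thesis using \<omega> by auto
  next
    case False
    have "?S \<le> s2 l / (1 + \<alpha>)" using \<omega>(3) \<alpha> by (simp add: le_divide_eq)
    then have "?S * (1 + \<epsilon>) \<le> s2 l / (1 + \<alpha>) * (1 + \<epsilon>)" using \<epsilon> by (intro mult_right_mono) auto
    also have "\<dots> = s2 l * (1 - (\<alpha> - \<epsilon>) / (1 + \<alpha>))" using \<alpha> by (simp add: field_simps)
    finally have below: "?S * (1 + \<epsilon>) < ?T" using False \<omega>(4) by linarith
    obtain j where j: "j < p" "s2 j \<le> ?S" "?T \<le> X j \<omega>"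
      using ex_le_kth_largest_and_ge_kth_largest[OF k] by blast
    have "s2 j * (1 + \<epsilon>) \<le> ?S * (1 + \<epsilon>)" using j \<epsilon> by (intro mult_right_mono) auto
    then have "\<omega> \<in> {\<omega> \<in> \<Omega>. s2 j * (1 + \<epsilon>) \<le> X j \<omega>}" using j below \<omega>(1) by simp
    then show ?thesis using j by blast
  qed
qed

lemma false_inclusion_cover:
  fixes X :: "nat \<Rightarrow> 'a \<Rightarrow> real" and s2 :: "nat \<Rightarrow> real"
  assumes k: "1 \<le> k" "k \<le> p"
    and K: "K \<subseteq> {j. j < p \<and> kth_largest k s2 p \<le> s2 j}" "card K = k"
    and S: "0 \<le> kth_largest k s2 p" and \<alpha>: "0 \<le> \<alpha>" "\<alpha> \<le> 1" and \<epsilon>: "0 \<le> \<epsilon>"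
  shows "{\<omega> \<in> \<Omega>. \<exists>l\<in>{l. l < p \<and> s2 l \<le> kth_largest k s2 p * (1 - \<alpha>)}.
            X l \<omega> \<ge> kth_largest k (\<lambda>\<nu>. X \<nu> \<omega>) p}
    \<subseteq> (\<Union>l\<in>{l. l < p \<and> s2 l \<le> kth_largest k s2 p * (1 - \<alpha>)}. {\<omega> \<in> \<Omega>. s2 l * (1 + \<epsilon>) \<le> X l \<omega>})
      \<union> (\<Union>j\<in>K. {\<omega> \<in> \<Omega>. X j \<omega> \<le> s2 j * (1 - (\<alpha> - \<epsilon>))})"
    (is "?F \<subseteq> ?High \<union> ?Low")
proof
  fix \<omega> assume "\<omega> \<in> ?F"
  let ?S = "kth_largest k s2 p" and ?T = "kth_largest k (\<lambda>\<nu>. X \<nu> \<omega>) p"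
  obtain l where \<omega>: "\<omega> \<in> \<Omega>" "l < p" "s2 l \<le> ?S * (1 - \<alpha>)" "?T \<le> X l \<omega>"
    using \<open>\<omega> \<in> ?F\<close> by auto
  show "\<omega> \<in> ?High \<union> ?Low"
  proof (cases "s2 l * (1 + \<epsilon>) \<le> X l \<omega>")
    case True
    then show ?thesis using \<omega> by auto
  next
    case False
    obtain j where j: "j \<in> K" "X j \<omega> \<le> ?T"
      using ex_in_le_kth_largest[OF k, of K "\<lambda>\<nu>. X \<nu> \<omega>"] K by auto
    have "s2 l * (1 + \<epsilon>) \<le> ?S * ((1 - \<alpha>) * (1 + \<epsilon>))"
      using mult_right_mono[OF \<omega>(3), of "1 + \<epsilon>"] \<epsilon> by (simp add: mult.assoc)
    also have "\<dots> \<le> s2 j * ((1 - \<alpha>) * (1 + \<epsilon>))"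
      using j K \<alpha> \<epsilon> by (intro mult_right_mono) auto
    also have "\<dots> \<le> s2 j * (1 - (\<alpha> - \<epsilon>))"
      using j K S \<alpha> \<epsilon> by (intro mult_left_mono) (auto simp: algebra_simps)
    finally have "\<omega> \<in> {\<omega> \<in> \<Omega>. X j \<omega> \<le> s2 j * (1 - (\<alpha> - \<epsilon>))}"
      using j False \<omega>(1,4) by simp
    then show ?thesis using j by blast
  qed
qed

text \<open>The error events are only covered by events, which spares proving that the empirical
  k-th largest value is measurable.\<close>

lemma (in prob_space) prob_cover_le:
  assumes "finite I" "finite J" "\<And>i. i \<in> I \<Longrightarrow> A i \<in> events" "\<And>j. j \<in> J \<Longrightarrow> B j \<in> events"
    and "\<And>i. i \<in> I \<Longrightarrow> prob (A i) \<le> a" "\<And>j. j \<in> J \<Longrightarrow> prob (B j) \<le> b"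
    and "real (card I) * a + real (card J) * b \<le> c"
    and "F \<subseteq> (\<Union>i\<in>I. A i) \<union> (\<Union>j\<in>J. B j)"
  shows "\<exists>E\<in>events. F \<subseteq> E \<and> prob E \<le> c"
proof (intro bexI conjI)
  show "(\<Union>i\<in>I. A i) \<union> (\<Union>j\<in>J. B j) \<in> events"
    using assms(1-4) by (intro sets.Un sets.finite_UN) auto
  have "prob ((\<Union>i\<in>I. A i) \<union> (\<Union>j\<in>J. B j)) \<le> prob (\<Union>i\<in>I. A i) + prob (\<Union>j\<in>J. B j)"
    using assms(1-4) by (intro measure_Un_le sets.finite_UN) auto
  also have "\<dots> \<le> (\<Sum>i\<in>I. prob (A i)) + (\<Sum>j\<in>J. prob (B j))"
    using assms(1-4) by (intro add_mono measure_UNION_le) auto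
  also have "\<dots> \<le> real (card I) * a + real (card J) * b"
    using assms(5,6) by (intro add_mono sum_bounded_above) auto
  finally show "prob ((\<Union>i\<in>I. A i) \<union> (\<Union>j\<in>J. B j)) \<le> c" using assms(7) by linarith
qed (fact assms(8))

lemma (in prob_space) false_exclusion_le:
  fixes X :: "nat \<Rightarrow> 'a \<Rightarrow> real" and s2 :: "nat \<Rightarrow> real"
  assumes n: "n \<ge> 1" and k: "1 \<le> k" "k \<le> p"
    and s2: "\<And>\<nu>. \<nu> < p \<Longrightarrow> s2 \<nu> > 0"
    and X: "\<And>\<nu>. \<nu> < p \<Longrightarrow> X \<nu> \<in> borel_measurable M"
    and law: "\<And>\<nu>. \<nu> < p \<Longrightarrow> distr M borel (X \<nu>) = distr (chi_square_law n) borel (\<lambda>x. s2 \<nu> * x / real n)"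
    and \<alpha>: "0 < \<alpha>" and \<epsilon>: "0 \<le> \<epsilon>" "\<epsilon> \<le> 1/3" "\<epsilon> \<le> \<alpha>"
    and Q: "Q \<le> 3 * real n * \<epsilon>\<^sup>2 / 16" "Q \<le> real n * (\<alpha> - \<epsilon>)\<^sup>2 / 4"
  shows "\<exists>E\<in>events. {\<omega> \<in> space M. \<exists>l\<in>{l. l < p \<and> s2 l \<ge> kth_largest k s2 p * (1 + \<alpha>)}.
                              X l \<omega> < kth_largest k (\<lambda>\<nu>. X \<nu> \<omega>) p} \<subseteq> E
           \<and> prob E \<le> real k * exp (- Q / (1 + \<alpha>)\<^sup>2) + real p * exp (- Q)"
proof -
  define I_in where "I_in = {l. l < p \<and> s2 l \<ge> kth_largest k s2 p * (1 + \<alpha>)}"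
  define J where "J = {j. j < p \<and> s2 j \<le> kth_largest k s2 p}"
  define d where "d = (\<alpha> - \<epsilon>) / (1 + \<alpha>)"
  have d: "0 \<le> d" "d < 1" using \<alpha> \<epsilon> by (simp_all add: d_def field_simps)
  have "Q / (1 + \<alpha>)\<^sup>2 \<le> real n * d\<^sup>2 / 4"
    using divide_right_mono[OF Q(2), of "(1 + \<alpha>)\<^sup>2"] by (simp add: d_def power_divide)
  then have "exp (- real n * d\<^sup>2 / 4) \<le> exp (- Q / (1 + \<alpha>)\<^sup>2)" by simp
  from order_trans[OF scaled_chi_square_lower_tail[OF n s2 X law d] this]
  have low: "prob {\<omega> \<in> space M. X l \<omega> \<le> s2 l * (1 - d)} \<le> exp (- Q / (1 + \<alpha>)\<^sup>2)" if "l \<in> I_in" for l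
    using that by (simp add: I_in_def)
  have "exp (- 3 * real n * \<epsilon>\<^sup>2 / 16) \<le> exp (- Q)" using Q(1) by simp
  from order_trans[OF scaled_chi_square_upper_tail[OF n s2 X law \<epsilon>(1,2)] this]
  have high: "prob {\<omega> \<in> space M. s2 j * (1 + \<epsilon>) \<le> X j \<omega>} \<le> exp (- Q)" if "j \<in> J" for j
    using that by (simp add: J_def)
  have "kth_largest k s2 p < kth_largest k s2 p * (1 + \<alpha>)"
    using kth_largest_pos[OF k, of s2] s2 \<alpha> by simp
  then have "I_in \<subseteq> {j. j < p \<and> kth_largest k s2 p < s2 j}" by (auto simp: I_in_def)
  then have "card I_in \<le> k"
    using card_greater_kth_largest[OF k, of s2] card_mono[of "{j. j < p \<and> kth_largest k s2 p < s2 j}" I_in]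
    by simp
  moreover have "card J \<le> p" using card_mono[of "{..<p}" J] by (auto simp: J_def)
  ultimately have bound: "real (card I_in) * exp (- Q / (1 + \<alpha>)\<^sup>2) + real (card J) * exp (- Q)
      \<le> real k * exp (- Q / (1 + \<alpha>)\<^sup>2) + real p * exp (- Q)"
    by (intro add_mono mult_right_mono) auto
  have cover: "{\<omega> \<in> space M. \<exists>l\<in>I_in. X l \<omega> < kth_largest k (\<lambda>\<nu>. X \<nu> \<omega>) p}
      \<subseteq> (\<Union>l\<in>I_in. {\<omega> \<in> space M. X l \<omega> \<le> s2 l * (1 - d)})
        \<union> (\<Union>j\<in>J. {\<omega> \<in> space M. s2 j * (1 + \<epsilon>) \<le> X j \<omega>})"
    unfolding I_in_def J_def d_def using k \<alpha> \<epsilon> by (intro false_exclusion_cover) auto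
  have "finite I_in" "finite J" by (simp_all add: I_in_def J_def)
  moreover have "{\<omega> \<in> space M. X l \<omega> \<le> s2 l * (1 - d)} \<in> events" if "l \<in> I_in" for l
    using X that by (simp add: I_in_def)
  moreover have "{\<omega> \<in> space M. s2 j * (1 + \<epsilon>) \<le> X j \<omega>} \<in> events" if "j \<in> J" for j
    using X that by (simp add: J_def)
  ultimately show ?thesis
    unfolding I_in_def[symmetric]
    by (rule prob_cover_le[OF _ _ _ _ low high bound cover])
qed

lemma (in prob_space) false_inclusion_le:
  fixes X :: "nat \<Rightarrow> 'a \<Rightarrow> real" and s2 :: "nat \<Rightarrow> real"
  assumes n: "n \<ge> 1" and k: "1 \<le> k" "k \<le> p"
    and s2: "\<And>\<nu>. \<nu> < p \<Longrightarrow> s2 \<nu> > 0"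
    and X: "\<And>\<nu>. \<nu> < p \<Longrightarrow> X \<nu> \<in> borel_measurable M"
    and law: "\<And>\<nu>. \<nu> < p \<Longrightarrow> distr M borel (X \<nu>) = distr (chi_square_law n) borel (\<lambda>x. s2 \<nu> * x / real n)"
    and \<alpha>: "0 < \<alpha>" "\<alpha> < 1" and \<epsilon>: "0 \<le> \<epsilon>" "\<epsilon> \<le> 1/3" "\<epsilon> \<le> \<alpha>"
    and Q: "Q \<le> 3 * real n * \<epsilon>\<^sup>2 / 16" "Q \<le> real n * (\<alpha> - \<epsilon>)\<^sup>2 / 4"
  shows "\<exists>E\<in>events. {\<omega> \<in> space M. \<exists>l\<in>{l. l < p \<and> s2 l \<le> kth_largest k s2 p * (1 - \<alpha>)}.
                              X l \<omega> \<ge> kth_largest k (\<lambda>\<nu>. X \<nu> \<omega>) p} \<subseteq> E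
           \<and> prob E \<le> real p * exp (- Q)"
proof -
  define S where "S = kth_largest k s2 p"
  define I_out where "I_out = {l. l < p \<and> s2 l \<le> S * (1 - \<alpha>)}"
  have "k \<le> card {j. j < p \<and> S \<le> s2 j}"
    unfolding S_def by (rule card_ge_kth_largest[OF k])
  then obtain K where K: "K \<subseteq> {j. j < p \<and> S \<le> s2 j}" "card K = k" "finite K"
    by (rule obtain_subset_with_card_n)
  have S: "S > 0" using kth_largest_pos[OF k, of s2] s2 by (simp add: S_def)
  have "exp (- 3 * real n * \<epsilon>\<^sup>2 / 16) \<le> exp (- Q)" using Q(1) by simp
  from order_trans[OF scaled_chi_square_upper_tail[OF n s2 X law \<epsilon>(1,2)] this]
  have high: "prob {\<omega> \<in> space M. s2 l * (1 + \<epsilon>) \<le> X l \<omega>} \<le> exp (- Q)" if "l \<in> I_out" for l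
    using that by (simp add: I_out_def)
  have "0 \<le> \<alpha> - \<epsilon>" "\<alpha> - \<epsilon> < 1" using \<alpha> \<epsilon> by simp_all
  moreover have "exp (- real n * (\<alpha> - \<epsilon>)\<^sup>2 / 4) \<le> exp (- Q)" using Q(2) by simp
  ultimately have low: "prob {\<omega> \<in> space M. X j \<omega> \<le> s2 j * (1 - (\<alpha> - \<epsilon>))} \<le> exp (- Q)" if "j \<in> K" for j
    using order_trans[OF scaled_chi_square_lower_tail[OF n s2 X law]] that K(1) by blast
  have "S * (1 - \<alpha>) < S" using S \<alpha> by simp
  then have "I_out \<inter> K = {}" using K by (auto simp: I_out_def)
  then have "card I_out + k \<le> p"
    using K card_Un_disjoint[of I_out K] card_mono[of "{..<p}" "I_out \<union> K"]
    by (force simp: I_out_def)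
  then have bound: "real (card I_out) * exp (- Q) + real (card K) * exp (- Q) \<le> real p * exp (- Q)"
    using K(2) by (simp flip: distrib_right)
  have cover: "{\<omega> \<in> space M. \<exists>l\<in>I_out. X l \<omega> \<ge> kth_largest k (\<lambda>\<nu>. X \<nu> \<omega>) p}
      \<subseteq> (\<Union>l\<in>I_out. {\<omega> \<in> space M. s2 l * (1 + \<epsilon>) \<le> X l \<omega>})
        \<union> (\<Union>j\<in>K. {\<omega> \<in> space M. X j \<omega> \<le> s2 j * (1 - (\<alpha> - \<epsilon>))})"
    unfolding I_out_def S_def using k K S \<alpha> \<epsilon> by (intro false_inclusion_cover) (auto simp: S_def)
  have "finite I_out" by (simp add: I_out_def)
  moreover have "{\<omega> \<in> space M. s2 l * (1 + \<epsilon>) \<le> X l \<omega>} \<in> events" if "l \<in> I_out" for l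
    using X that by (simp add: I_out_def)
  moreover have "{\<omega> \<in> space M. X j \<omega> \<le> s2 j * (1 - (\<alpha> - \<epsilon>))} \<in> events" if "j \<in> K" for j
    using X that K(1) by auto
  ultimately show ?thesis
    unfolding S_def[symmetric] I_out_def[symmetric]
    by (rule prob_cover_le[OF _ \<open>finite K\<close> _ _ high low bound cover])
qed

lemma (in prob_space) selection_error_le:
  fixes X :: "nat \<Rightarrow> 'a \<Rightarrow> real" and s2 :: "nat \<Rightarrow> real"
  assumes n: "n \<ge> 1" and k: "1 \<le> k" "k \<le> p"
    and model: "\<And>\<nu>. \<nu> < p \<Longrightarrow> s2 \<nu> > 0" "\<And>\<nu>. \<nu> < p \<Longrightarrow> X \<nu> \<in> borel_measurable M"
      "\<And>\<nu>. \<nu> < p \<Longrightarrow> distr M borel (X \<nu>) = distr (chi_square_law n) borel (\<lambda>x. s2 \<nu> * x / real n)"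
    and \<alpha>: "0 < \<alpha>" "\<alpha> < 1" and \<epsilon>: "0 \<le> \<epsilon>" "\<epsilon> \<le> 1/3" "\<epsilon> \<le> \<alpha>"
    and Q: "Q \<le> 3 * real n * \<epsilon>\<^sup>2 / 16" "Q \<le> real n * (\<alpha> - \<epsilon>)\<^sup>2 / 4"
  shows "measure M ({\<omega> \<in> space M. \<exists>l\<in>{l. l < p \<and> s2 l \<ge> kth_largest k s2 p * (1 + \<alpha>)}.
                              X l \<omega> < kth_largest k (\<lambda>\<nu>. X \<nu> \<omega>) p}
                 \<union> {\<omega> \<in> space M. \<exists>l\<in>{l. l < p \<and> s2 l \<le> kth_largest k s2 p * (1 - \<alpha>)}.
                              X l \<omega> \<ge> kth_largest k (\<lambda>\<nu>. X \<nu> \<omega>) p})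
    \<le> real k * exp (- Q / (1 + \<alpha>)\<^sup>2) + 2 * real p * exp (- Q)"
    (is "measure M (?FE \<union> ?FI) \<le> _")
proof -
  have "\<exists>E\<in>events. ?FE \<subseteq> E \<and> prob E \<le> real k * exp (- Q / (1 + \<alpha>)\<^sup>2) + real p * exp (- Q)"
    using n k \<alpha> \<epsilon> Q by (intro false_exclusion_le) (simp_all add: model)
  then obtain E1 where E1: "E1 \<in> events" "?FE \<subseteq> E1"
      "prob E1 \<le> real k * exp (- Q / (1 + \<alpha>)\<^sup>2) + real p * exp (- Q)"
    by (elim bexE conjE) (rule that)
  have "\<exists>E\<in>events. ?FI \<subseteq> E \<and> prob E \<le> real p * exp (- Q)"
    using n k \<alpha> \<epsilon> Q by (intro false_inclusion_le) (simp_all add: model)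
  then obtain E2 where E2: "E2 \<in> events" "?FI \<subseteq> E2" "prob E2 \<le> real p * exp (- Q)"
    by (elim bexE conjE) (rule that)
  have "?FE \<union> ?FI \<subseteq> E1 \<union> E2" using E1(2) E2(2) by (rule Un_mono)
  then have "measure M (?FE \<union> ?FI) \<le> prob (E1 \<union> E2)"
    using E1(1) E2(1) by (intro finite_measure_mono sets.Un)
  also have "\<dots> \<le> prob E1 + prob E2"
    using E1(1) E2(1) by (rule measure_Un_le)
  finally show ?thesis using E1(3) E2(3) by linarith
qed

lemma balanced_deviation_exponents:
  fixes \<gamma> \<alpha> \<epsilon> b :: real
  assumes n: "n \<ge> 1"
    and \<alpha>: "\<alpha> = \<gamma> * real n powr (-1/2) * sqrt (ln (real n))"
    and b: "b = (\<gamma> * sqrt 3 / (4 + 2 * sqrt 3))\<^sup>2"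
    and \<epsilon>: "\<epsilon> = 2 * \<alpha> / (2 + sqrt 3)"
  shows "3 * real n * \<epsilon>\<^sup>2 / 16 = b * ln (real n)" and "real n * (\<alpha> - \<epsilon>)\<^sup>2 / 4 = b * ln (real n)"
proof -
  have "(real n powr (-1/2))\<^sup>2 = real n powr (-1/2 + -1/2)"
    by (simp only: power2_eq_square powr_add)
  also have "\<dots> = 1 / real n"
    using n by (simp add: powr_minus_divide)
  finally have "(real n powr (-1/2))\<^sup>2 = 1 / real n" .
  then have \<alpha>2: "\<alpha>\<^sup>2 = \<gamma>\<^sup>2 * ln (real n) / real n"
    using n by (simp add: \<alpha> power_mult_distrib)
  have "(4 + 2 * sqrt 3)\<^sup>2 = 4 * (2 + sqrt 3)\<^sup>2" by (simp add: power2_eq_square algebra_simps)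
  then have "b = 3 * \<gamma>\<^sup>2 / (4 * (2 + sqrt 3)\<^sup>2)" by (simp add: b power_divide power_mult_distrib)
  then show first: "3 * real n * \<epsilon>\<^sup>2 / 16 = b * ln (real n)"
    using n by (simp add: \<epsilon> \<alpha>2 power_divide power_mult_distrib field_simps)
  have "2 + sqrt 3 \<noteq> (0::real)" using real_sqrt_ge_zero[of 3] by linarith
  then have "\<epsilon> * (2 + sqrt 3) = 2 * \<alpha>" by (simp add: \<epsilon>)
  then have "\<alpha> - \<epsilon> = \<epsilon> * sqrt 3 / 2" unfolding distrib_left by linarith
  then have "(\<alpha> - \<epsilon>)\<^sup>2 = (\<epsilon> * sqrt 3 / 2)\<^sup>2" by (simp only:)
  also have "\<dots> = 3 * \<epsilon>\<^sup>2 / 4" by (simp add: power_mult_distrib power_divide)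
  finally have "(\<alpha> - \<epsilon>)\<^sup>2 = 3 * \<epsilon>\<^sup>2 / 4" .
  then show "real n * (\<alpha> - \<epsilon>)\<^sup>2 / 4 = b * ln (real n)"
    unfolding first[symmetric] by (simp add: field_simps)
qed

lemma one_minus_two_mult_le_inverse_square:
  fixes \<alpha> :: real assumes "0 \<le> \<alpha>"
  shows "1 - 2 * \<alpha> \<le> 1 / (1 + \<alpha>)\<^sup>2"
proof -
  have "(1 - 2 * \<alpha>) * (1 + \<alpha>)\<^sup>2 = 1 - 3 * \<alpha>\<^sup>2 - 2 * \<alpha> ^ 3"
    by (simp add: power2_eq_square power3_eq_cube algebra_simps)
  also have "\<dots> \<le> 1"
    using zero_le_power[OF assms, of 2] zero_le_power[OF assms, of 3] by linarith
  finally show ?thesis using assms by (simp add: field_simps)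
qed

lemma balanced_deviation_bounds:
  fixes \<alpha> \<epsilon> :: real
  assumes \<alpha>: "0 \<le> \<alpha>" "\<alpha> < 1/2" and \<epsilon>: "\<epsilon> = 2 * \<alpha> / (2 + sqrt 3)"
  shows "0 \<le> \<epsilon>" "\<epsilon> \<le> 1/3" "\<epsilon> \<le> \<alpha>"
proof -
  have pos: "0 < 2 + sqrt (3::real)" and "1 < sqrt (3::real)" by (simp_all add: add_pos_nonneg)
  have "\<alpha> * 2 \<le> 2/3 + sqrt 3 / 3" using \<alpha> \<open>1 < sqrt 3\<close> by linarith
  moreover have "2 * \<alpha> \<le> \<alpha> * (2 + sqrt 3)"
    using \<alpha> mult_nonneg_nonneg[of \<alpha> "sqrt 3"] by (simp add: algebra_simps)
  ultimately show "0 \<le> \<epsilon>" "\<epsilon> \<le> 1/3" "\<epsilon> \<le> \<alpha>"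
    unfolding \<epsilon> pos_divide_le_eq[OF pos] using \<alpha> pos by simp_all
qed

lemma selection_bound_le:
  fixes \<alpha> b Q :: real
  assumes n: "1 < real n" and k: "1 \<le> k" and \<alpha>: "0 \<le> \<alpha>" and b: "0 \<le> b"
    and Q: "Q = b * ln (real n)"
  shows "real k * exp (- Q / (1 + \<alpha>)\<^sup>2) + 2 * real p * exp (- Q)
    \<le> 2 * real p * real k * real n powr (- b) + real k * real n powr (- ((1 - 2 * \<alpha>) * b))"
proof -
  have "(1 - 2 * \<alpha>) * Q \<le> Q / (1 + \<alpha>)\<^sup>2"
    using mult_right_mono[OF one_minus_two_mult_le_inverse_square[OF \<alpha>], of Q] b n by (simp add: Q)
  then have "real k * exp (- Q / (1 + \<alpha>)\<^sup>2) \<le> real k * real n powr (- ((1 - 2 * \<alpha>) * b))"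
    using n by (intro mult_left_mono) (auto simp: powr_def Q mult.assoc)
  moreover have "real p * 1 \<le> real p * real k" using k by (intro mult_left_mono) auto
  from mult_right_mono[OF this, of "2 * exp (- Q)"]
  have "2 * real p * exp (- Q) \<le> 2 * real p * real k * exp (- Q)" by (simp add: mult_ac)
  moreover have "exp (- Q) = real n powr (- b)" using n by (simp add: powr_def Q)
  ultimately show ?thesis by simp
qed

lemma selection_bound_ge_one:
  fixes \<alpha> b :: real
  assumes n: "n \<ge> 1" and k: "1 \<le> k" and b: "0 \<le> b" and degenerate: "n = 1 \<or> 1/2 \<le> \<alpha>"
  shows "1 \<le> 2 * real p * real k * real n powr (- b) + real k * real n powr (- ((1 - 2 * \<alpha>) * b))"
proof -
  have "0 \<le> 2 * real p * real k * real n powr (- b)" by simp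
  moreover have "1 \<le> real k * real n powr (- ((1 - 2 * \<alpha>) * b))"
  proof (cases "n = 1")
    case False
    then have "0 \<le> - ((1 - 2 * \<alpha>) * b)" using degenerate b by (simp add: mult_nonpos_nonneg)
    then have "1 \<le> real n powr (- ((1 - 2 * \<alpha>) * b))" using n by (intro ge_one_powr_ge_zero) auto
    then show ?thesis using k by (intro mult_ge1_I) auto
  qed (use k in simp)
  ultimately show ?thesis by linarith
qed

theorem theorem4:
  fixes M :: "'a measure" and X :: "nat \<Rightarrow> 'a \<Rightarrow> real" and s2 :: "nat \<Rightarrow> real"
    and n p k :: nat and \<gamma> :: real
  assumes "prob_space M"
    and "n \<ge> 1"
    and "1 \<le> k" and "k \<le> p"
    and "\<gamma> > 0"
    and "\<And>\<nu>. \<nu> < p \<Longrightarrow> s2 \<nu> > 0"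
    and "\<And>\<nu>. \<nu> < p \<Longrightarrow> X \<nu> \<in> borel_measurable M"
    and "\<And>\<nu>. \<nu> < p \<Longrightarrow>
           distr M borel (X \<nu>) = distr (chi_square_law n) borel (\<lambda>x. s2 \<nu> * x / real n)"
  shows
    "let \<alpha> = \<gamma> * real n powr (-1/2) * sqrt (ln (real n));
         b = (\<gamma> * sqrt 3 / (4 + 2 * sqrt 3))\<^sup>2;
         I_in = {l. l < p \<and> s2 l \<ge> kth_largest k s2 p * (1 + \<alpha>)};
         I_out = {l. l < p \<and> s2 l \<le> kth_largest k s2 p * (1 - \<alpha>)};
         FE = {\<omega> \<in> space M. \<exists>l\<in>I_in. X l \<omega> < kth_largest k (\<lambda>\<nu>. X \<nu> \<omega>) p};
         FI = {\<omega> \<in> space M. \<exists>l\<in>I_out. X l \<omega> \<ge> kth_largest k (\<lambda>\<nu>. X \<nu> \<omega>) p}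
     in measure M (FE \<union> FI)
          \<le> 2 * real p * real k * real n powr (- b) + real k * real n powr (- ((1 - 2 * \<alpha>) * b))"
proof -
  interpret prob_space M by fact
  note n = assms(2) and k = assms(3,4) and model = assms(6-8)
  define \<alpha> where "\<alpha> = \<gamma> * real n powr (-1/2) * sqrt (ln (real n))"
  define b where "b = (\<gamma> * sqrt 3 / (4 + 2 * sqrt 3))\<^sup>2"
  define \<epsilon> where "\<epsilon> = 2 * \<alpha> / (2 + sqrt 3)"
  define Q where "Q = b * ln (real n)"
  have b: "0 \<le> b" by (simp add: b_def)
  show ?thesis
  proof (cases "n = 1 \<or> 1/2 \<le> \<alpha>")
    case True
    show ?thesis
      unfolding Let_def \<alpha>_def[symmetric] b_def[symmetric]
      by (rule order_trans[OF prob_le_1 selection_bound_ge_one[OF n k(1) b True]])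
  next
    case False
    then have \<alpha>: "0 < \<alpha>" "\<alpha> < 1/2" and "1 < real n" using n assms(5) by (auto simp: \<alpha>_def)
    have \<epsilon>: "0 \<le> \<epsilon>" "\<epsilon> \<le> 1/3" "\<epsilon> \<le> \<alpha>"
      using balanced_deviation_bounds[OF less_imp_le[OF \<alpha>(1)] \<alpha>(2) \<epsilon>_def] by auto
    have Q: "Q \<le> 3 * real n * \<epsilon>\<^sup>2 / 16" "Q \<le> real n * (\<alpha> - \<epsilon>)\<^sup>2 / 4"
      using balanced_deviation_exponents[OF n \<alpha>_def b_def \<epsilon>_def] by (simp_all add: Q_def)
    have "real k * exp (- Q / (1 + \<alpha>)\<^sup>2) + 2 * real p * exp (- Q)
        \<le> 2 * real p * real k * real n powr (- b) + real k * real n powr (- ((1 - 2 * \<alpha>) * b))"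
      using \<open>1 < real n\<close> k(1) \<alpha>(1) b Q_def by (intro selection_bound_le) auto
    then show ?thesis
      unfolding Let_def \<alpha>_def[symmetric] b_def[symmetric]
      using n k \<alpha> \<epsilon> Q by (intro order_trans[OF selection_error_le]) (simp_all add: model)
  qed
qed

end
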